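(* Let $\gamma = G_P + Q$ be a graph, where one of the following holds: (1) $G_P$ is a planar graph and $Q$ is $K_{1,1}$, $K_{2,2}$, or a set (with no edges) of an even number of vertices; (2) $G_P$ is an outerplanar graph and $Q$ is a set (with no edges) of an odd number of vertices. Then $\gamma$ is achirally embeddable in $S^3$.
   Context: A graph is achirally embeddable in $S^3$ if it has an embedding $\Gamma$ in $S^3$ for which there is an orientation-reversing homeomorphism $h$ of $S^3$ with $h(\Gamma)=\Gamma$. The join $A+B$ of graphs $A$ and $B$ is $A\cup B$ together with edges joining every vertex of $A$ to every vertex of $B$. A planar graph is called outerplanar if its join with a single vertex is still planar. *)

theory Defs
  imports "HOL-Homology.Homology"
begin

definition simple_graph :: "'v set \<Rightarrow> 'v set set \<Rightarrow> bool" where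
  "simple_graph V E \<longleftrightarrow> finite V \<and> E \<subseteq> {{a, b} | a b. a \<in> V \<and> b \<in> V \<and> a \<noteq> b}"

definition graph_embedding ::
  "'b topology \<Rightarrow> 'v set \<Rightarrow> 'v set set \<Rightarrow> ('v \<Rightarrow> 'b) \<Rightarrow> ('v set \<Rightarrow> real \<Rightarrow> 'b) \<Rightarrow> bool" where
  "graph_embedding X V E pos gam \<longleftrightarrow>
     pos ` V \<subseteq> topspace X \<and> inj_on pos V \<and>
     (\<forall>e\<in>E. pathin X (gam e) \<and> inj_on (gam e) {0..1} \<and> {gam e 0, gam e 1} = pos ` e \<and>
             gam e ` {0<..<1} \<inter> pos ` V = {}) \<and>
     (\<forall>e\<in>E. \<forall>e'\<in>E. e \<noteq> e' \<longrightarrow> gam e ` {0<..<1} \<inter> gam e' ` {0..1} = {})"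

definition embedding_image :: "'v set \<Rightarrow> 'v set set \<Rightarrow> ('v \<Rightarrow> 'b) \<Rightarrow> ('v set \<Rightarrow> real \<Rightarrow> 'b) \<Rightarrow> 'b set" where
  "embedding_image V E pos gam = pos ` V \<union> (\<Union>e\<in>E. gam e ` {0..1})"

definition planar :: "'v set \<Rightarrow> 'v set set \<Rightarrow> bool" where
  "planar V E \<longleftrightarrow> (\<exists>pos gam. graph_embedding (Euclidean_space 2) V E pos gam)"

definition join_V :: "'a set \<Rightarrow> 'b set \<Rightarrow> ('a + 'b) set" where
  "join_V VA VB = Inl ` VA \<union> Inr ` VB"

definition join_E :: "'a set \<Rightarrow> 'a set set \<Rightarrow> 'b set \<Rightarrow> 'b set set \<Rightarrow> ('a + 'b) set set" where
  "join_E VA EA VB EB = (image Inl) ` EA \<union> (image Inr) ` EB \<union> {{Inl a, Inr b} | a b. a \<in> VA \<and> b \<in> VB}"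

definition outerplanar :: "'v set \<Rightarrow> 'v set set \<Rightarrow> bool" where
  "outerplanar V E \<longleftrightarrow> planar V E \<and> planar (join_V V {()}) (join_E V E {()} {})"

text \<open>S^3 is nsphere 3; a homeomorphism of S^3 is orientation-reversing iff its Brouwer degree is -1.\<close>
definition achirally_embeddable :: "'v set \<Rightarrow> 'v set set \<Rightarrow> bool" where
  "achirally_embeddable V E \<longleftrightarrow>
     (\<exists>pos gam h. graph_embedding (nsphere 3) V E pos gam \<and>
        homeomorphic_map (nsphere 3) (nsphere 3) h \<and> Brouwer_degree2 3 h = -1 \<and>
        h ` embedding_image V E pos gam = embedding_image V E pos gam)"

definition K11_V :: "nat set" where "K11_V = {0, 1}"
definition K11_E :: "nat set set" where "K11_E = {{0, 1}}"
definition K22_V :: "nat set" where "K22_V = {0, 1, 2, 3}"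
definition K22_E :: "nat set set" where "K22_E = {{0, 2}, {0, 3}, {1, 2}, {1, 3}}"

end

theory Submission
  imports Defs
begin

text \<open>
  Draw \<open>G\<^sub>P\<close> in the horizontal plane \<open>z = 0\<close> of \<open>\<real>\<^sup>3\<close> and choose a point \<open>p\<close> of that
  plane to the right of the drawing, with a \<open>y\<close>-coordinate such that no two vertices are
  collinear with \<open>p\<close>. The vertices of \<open>Q\<close> go on the vertical line through \<open>p\<close>, at heights
  forming a set symmetric under \<open>z \<mapsto> -z\<close>, and each is joined to every vertex of \<open>G\<^sub>P\<close>
  by a straight segment; the edges of \<open>Q\<close> are drawn in the vertical plane through \<open>p\<close> and
  meet \<open>z = 0\<close> only off the drawing of \<open>G\<^sub>P\<close>. The resulting spatial graph is invariant
  under the reflection \<open>z \<mapsto> -z\<close>, and inverse stereographic projection carries it to an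
  embedding in \<open>S\<^sup>3\<close> invariant under a reflection, which has degree \<open>-1\<close>.
  For an odd independent set \<open>Q\<close>, outerplanarity gives a planar drawing of \<open>G\<^sub>P + w\<close>:
  the apex \<open>w\<close> serves as the vertex of \<open>Q\<close> at height \<open>0\<close>, and the remaining even number
  of vertices are added as before.
\<close>

lemma graph_embeddingD:
  assumes "graph_embedding X V E pos gam"
  shows "pos ` V \<subseteq> topspace X" "inj_on pos V"
    and "e \<in> E \<Longrightarrow> pathin X (gam e)"
    and "e \<in> E \<Longrightarrow> inj_on (gam e) {0..1}"
    and "e \<in> E \<Longrightarrow> {gam e 0, gam e 1} = pos ` e"
    and "e \<in> E \<Longrightarrow> gam e ` {0<..<1} \<inter> pos ` V = {}"
    and "e \<in> E \<Longrightarrow> e' \<in> E \<Longrightarrow> e \<noteq> e' \<Longrightarrow> gam e ` {0<..<1} \<inter> gam e' ` {0..1} = {}"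
  using assms unfolding graph_embedding_def by simp_all

lemma graph_embeddingI:
  assumes "pos ` V \<subseteq> topspace X" "inj_on pos V"
    and "\<And>e. e \<in> E \<Longrightarrow> pathin X (gam e)"
    and "\<And>e. e \<in> E \<Longrightarrow> inj_on (gam e) {0..1}"
    and "\<And>e. e \<in> E \<Longrightarrow> {gam e 0, gam e 1} = pos ` e"
    and "\<And>e. e \<in> E \<Longrightarrow> gam e ` {0<..<1} \<inter> pos ` V = {}"
    and "\<And>e e'. e \<in> E \<Longrightarrow> e' \<in> E \<Longrightarrow> e \<noteq> e' \<Longrightarrow> gam e ` {0<..<1} \<inter> gam e' ` {0..1} = {}"
  shows "graph_embedding X V E pos gam"
  using assms unfolding graph_embedding_def by simp

lemma pathin_image_subset_topspace: "pathin X g \<Longrightarrow> g ` {0..1} \<subseteq> topspace X"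
  unfolding pathin_def using continuous_map_image_subset_topspace by fastforce

lemma pathin_euclidean_iff_path: "pathin euclidean g \<longleftrightarrow> path g"
  using pathin_canon_iff[of UNIV g] by simp

lemma graph_embedding_map:
  assumes emb: "graph_embedding X V E pos gam"
    and f: "continuous_map X Y f" "inj_on f (topspace X)"
  shows "graph_embedding Y V E (f \<circ> pos) (\<lambda>e. f \<circ> gam e)"
proof -
  note emb = graph_embeddingD[OF emb]
  have arc_in: "gam e ` {0..1} \<subseteq> topspace X" if "e \<in> E" for e
    using pathin_image_subset_topspace[OF emb(3)[OF that]] .
  then have arc_interior_in: "gam e ` {0<..<1} \<subseteq> topspace X" if "e \<in> E" for e
    using that by fastforce
  have image_Int: "f ` A \<inter> f ` B = {}" if "A \<inter> B = {}" "A \<subseteq> topspace X" "B \<subseteq> topspace X" for A B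
    using inj_on_image_Int[OF f(2) that(2,3)] that(1) by simp
  show ?thesis
  proof (rule graph_embeddingI)
    show "(f \<circ> pos) ` V \<subseteq> topspace Y"
      using emb(1) continuous_map_image_subset_topspace[OF f(1)] by (auto simp: image_subset_iff)
    show "inj_on (f \<circ> pos) V"
      using emb(2) inj_on_subset[OF f(2) emb(1)] by (rule comp_inj_on)
  next
    fix e assume e: "e \<in> E"
    show "pathin Y (f \<circ> gam e)"
      using emb(3)[OF e] f(1) unfolding pathin_def by (rule continuous_map_compose)
    show "inj_on (f \<circ> gam e) {0..1}"
      using emb(4)[OF e] inj_on_subset[OF f(2) arc_in[OF e]] by (rule comp_inj_on)
    show "{(f \<circ> gam e) 0, (f \<circ> gam e) 1} = (f \<circ> pos) ` e"
      using arg_cong[OF emb(5)[OF e], of "image f"] by (simp add: image_comp)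
    show "(f \<circ> gam e) ` {0<..<1} \<inter> (f \<circ> pos) ` V = {}"
      using image_Int[OF emb(6)[OF e] arc_interior_in[OF e] emb(1)] by (simp add: image_comp)
  next
    fix e e' assume "e \<in> E" "e' \<in> E" "e \<noteq> e'"
    then show "(f \<circ> gam e) ` {0<..<1} \<inter> (f \<circ> gam e') ` {0..1} = {}"
      using image_Int[OF emb(7) arc_interior_in arc_in] by (simp add: image_comp)
  qed
qed

lemma image_eq_if_involution:
  assumes "f ` S \<subseteq> S" "\<And>x. f (f x) = x"
  shows "f ` S = S"
proof
  show "S \<subseteq> f ` S"
  proof
    fix x assume "x \<in> S"
    then have "f x \<in> S"
      using assms(1) by blast
    moreover have "x = f (f x)"
      using assms(2) by simp
    ultimately show "x \<in> f ` S"
      by (rule rev_image_eqI)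
  qed
qed (rule assms(1))

lemma embedding_image_map:
  "embedding_image V E (f \<circ> pos) (\<lambda>e. f \<circ> gam e) = f ` embedding_image V E pos gam"
  by (simp add: embedding_image_def image_Un image_UN image_comp)

section \<open>Achiral embeddings from reflection-symmetric drawings in \<open>\<real>\<^sup>3\<close>\<close>

text \<open>Inverse stereographic projection, with the \<open>z\<close>-coordinate sent to coordinate \<open>0\<close> of
  \<open>S\<^sup>3\<close>, so that \<open>reflect_z\<close> corresponds to the reflection whose degree is computed
  in \<open>Brouwer_degree2_reflection\<close>.\<close>
definition inv_stereo :: "real \<times> real \<times> real \<Rightarrow> nat \<Rightarrow> real" where
  "inv_stereo = (\<lambda>(x, y, z) i. let d = x\<^sup>2 + y\<^sup>2 + z\<^sup>2 + 1 in
     if i = 0 then 2 * z / d else if i = 1 then 2 * x / d else if i = 2 then 2 * y / d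
     else if i = 3 then (x\<^sup>2 + y\<^sup>2 + z\<^sup>2 - 1) / d else 0)"

definition reflect_z :: "real \<times> real \<times> real \<Rightarrow> real \<times> real \<times> real" where
  "reflect_z = (\<lambda>(x, y, z). (x, y, - z))"

lemma sum_squares_plus_one_pos: "0 < x\<^sup>2 + y\<^sup>2 + z\<^sup>2 + (1::real)"
  by (intro add_nonneg_pos add_nonneg_nonneg) auto

lemma inv_stereo_in_nsphere: "inv_stereo u \<in> topspace (nsphere 3)"
proof -
  obtain x y z where u: "u = (x, y, z)" by (cases u) auto
  have nz: "x\<^sup>2 + y\<^sup>2 + z\<^sup>2 + 1 \<noteq> 0"
    using sum_squares_plus_one_pos by (rule less_imp_neq[symmetric])
  have "(\<Sum>i\<le>3. inv_stereo u i ^ 2) = 1"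
    using nz by (simp add: u inv_stereo_def numeral_3_eq_3 power_divide field_simps)
      (simp add: power2_eq_square algebra_simps)
  then show ?thesis
    by (simp add: nsphere u inv_stereo_def)
qed

lemma inj_inv_stereo: "inj inv_stereo"
proof
  fix u v assume eq: "inv_stereo u = inv_stereo v"
  obtain x y z where u: "u = (x, y, z)" by (cases u) auto
  obtain x' y' z' where v: "v = (x', y', z')" by (cases v) auto
  define d where "d = x\<^sup>2 + y\<^sup>2 + z\<^sup>2 + 1"
  define d' where "d' = x'\<^sup>2 + y'\<^sup>2 + z'\<^sup>2 + 1"
  have pos: "d > 0" "d' > 0" unfolding d_def d'_def by (rule sum_squares_plus_one_pos)+
  have "(d - 2) / d = (d' - 2) / d'"
    using fun_cong[OF eq, of 3] unfolding d_def d'_def by (simp add: u v inv_stereo_def algebra_simps)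
  then have "1 - 2 / d = 1 - 2 / d'"
    using pos by (simp add: diff_divide_distrib)
  then have "d = d'" by simp
  moreover have "2 * z / d = 2 * z' / d'" "2 * x / d = 2 * x' / d'" "2 * y / d = 2 * y' / d'"
    using fun_cong[OF eq, of 0] fun_cong[OF eq, of 1] fun_cong[OF eq, of 2]
    by (simp_all add: u v inv_stereo_def d_def d'_def)
  ultimately show "u = v"
    using pos by (simp add: u v)
qed

lemma continuous_map_inv_stereo: "continuous_map euclidean (nsphere 3) inv_stereo"
proof -
  have nz: "x\<^sup>2 + y\<^sup>2 + z\<^sup>2 + 1 \<noteq> (0::real)" for x y z
    using sum_squares_plus_one_pos by (rule less_imp_neq[symmetric])
  have "continuous_on UNIV (\<lambda>u. inv_stereo u i)" for i
  proof -
    consider "i = 0" | "i = 1" | "i = 2" | "i = 3" | "i > 3" by linarith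
    then show ?thesis
      by cases (auto simp: inv_stereo_def case_prod_beta nz intro!: continuous_intros)
  qed
  then show ?thesis
    using inv_stereo_in_nsphere
    by (auto simp: nsphere continuous_map_in_subtopology continuous_map_componentwise_UNIV)
qed

lemma inv_stereo_reflect_z: "inv_stereo (reflect_z u) = (\<lambda>i. if i = 0 then - inv_stereo u i else inv_stereo u i)"
  by (auto simp: inv_stereo_def reflect_z_def Let_def split: prod.splits)

lemma achirally_embeddable_if_reflect_z_invariant:
  assumes emb: "graph_embedding euclidean V E pos gam"
    and invariant: "reflect_z ` embedding_image V E pos gam = embedding_image V E pos gam"
  shows "achirally_embeddable V E"
proof -
  let ?r = "\<lambda>x i. if i = 0 then - x i else x i :: real"
  let ?S = "embedding_image V E pos gam"
  have "?r ` inv_stereo ` ?S = inv_stereo ` reflect_z ` ?S"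
    by (simp add: image_image inv_stereo_reflect_z)
  with invariant have "?r ` inv_stereo ` ?S = inv_stereo ` ?S"
    by simp
  moreover have "graph_embedding (nsphere 3) V E (inv_stereo \<circ> pos) (\<lambda>e. inv_stereo \<circ> gam e)"
    using emb continuous_map_inv_stereo by (rule graph_embedding_map) (simp add: inj_inv_stereo)
  moreover have "homeomorphic_map (nsphere 3) (nsphere 3) ?r"
    by (rule homeomorphic_map_involution) (auto simp: continuous_map_nsphere_reflection)
  ultimately show ?thesis
    unfolding achirally_embeddable_def
    by (intro exI[of _ "inv_stereo \<circ> pos"] exI[of _ "\<lambda>e. inv_stereo \<circ> gam e"] exI[of _ ?r])
      (simp add: embedding_image_map Brouwer_degree2_reflection)
qed

lemma achirally_embeddable_image:
  assumes "achirally_embeddable V E" "inj f"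
  shows "achirally_embeddable (f ` V) (image f ` E)"
proof -
  obtain pos gam h where emb: "graph_embedding (nsphere 3) V E pos gam"
    and h: "homeomorphic_map (nsphere 3) (nsphere 3) h" "Brouwer_degree2 3 h = -1"
      "h ` embedding_image V E pos gam = embedding_image V E pos gam"
    using assms(1) unfolding achirally_embeddable_def by blast
  let ?pos = "pos \<circ> inv_into UNIV f" and ?gam = "\<lambda>e. gam (inv_into UNIV f ` e)"
  have pos_image: "?pos ` f ` S = pos ` S" for S
    using image_inv_f_f[OF assms(2)] by (metis image_comp)
  have gam_image: "?gam (f ` e) = gam e" for e
    using image_inv_f_f[OF assms(2)] by simp
  note emb = graph_embeddingD[OF emb]
  have "graph_embedding (nsphere 3) (f ` V) (image f ` E) ?pos ?gam"
  proof (rule graph_embeddingI)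
    show "?pos ` f ` V \<subseteq> topspace (nsphere 3)"
      using emb(1) pos_image by simp
    show "inj_on ?pos (f ` V)"
    proof (rule comp_inj_on)
      show "inj_on (inv_into UNIV f) (f ` V)"
        by (rule inj_on_inv_into) blast
      show "inj_on pos (inv_into UNIV f ` f ` V)"
        using emb(2) image_inv_f_f[OF assms(2)] by simp
    qed
  next
    fix e' assume "e' \<in> image f ` E"
    then obtain e where "e \<in> E" "e' = f ` e" by blast
    then show "pathin (nsphere 3) (?gam e')" "inj_on (?gam e') {0..1}"
      "{?gam e' 0, ?gam e' 1} = ?pos ` e'" "?gam e' ` {0<..<1} \<inter> ?pos ` f ` V = {}"
      using emb(3-6) gam_image pos_image by simp_all
  next
    fix e1' e2' assume "e1' \<in> image f ` E" "e2' \<in> image f ` E" "e1' \<noteq> e2'"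
    then obtain e1 e2 where "e1 \<in> E" "e2 \<in> E" "e1 \<noteq> e2" "e1' = f ` e1" "e2' = f ` e2"
      by blast
    then show "?gam e1' ` {0<..<1} \<inter> ?gam e2' ` {0..1} = {}"
      using emb(7) gam_image by simp
  qed
  moreover have "embedding_image (f ` V) (image f ` E) ?pos ?gam = embedding_image V E pos gam"
    using pos_image gam_image by (simp add: embedding_image_def)
  ultimately show ?thesis
    unfolding achirally_embeddable_def using h by metis
qed

definition plane_coords :: "(nat \<Rightarrow> real) \<Rightarrow> real \<times> real" where
  "plane_coords x = (x 0, x 1)"

lemma continuous_map_plane_coords: "continuous_map (Euclidean_space 2) euclidean plane_coords"
proof -
  have "continuous_map (Euclidean_space 2) euclideanreal (\<lambda>x. x i)" for i
    unfolding Euclidean_space_def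
    by (intro continuous_map_from_subtopology continuous_map_product_projection) simp
  then show ?thesis
    unfolding plane_coords_def prod_topology_euclidean[symmetric] by (intro continuous_map_pairedI)
qed

lemma inj_on_plane_coords: "inj_on plane_coords (topspace (Euclidean_space 2))"
proof
  fix x y assume "x \<in> topspace (Euclidean_space 2)" "y \<in> topspace (Euclidean_space 2)"
    and "plane_coords x = plane_coords y"
  then show "x = y"
    by (auto simp: topspace_Euclidean_space plane_coords_def fun_eq_iff)
      (metis less_2_cases not_less)
qed

lemma planar_imp_plane_embedding:
  assumes "planar V E"
  obtains pos :: "'v \<Rightarrow> real \<times> real" and gam where "graph_embedding euclidean V E pos gam"
proof -
  from assms obtain pos gam where "graph_embedding (Euclidean_space 2) V E pos gam"
    unfolding planar_def by blast
  from graph_embedding_map[OF this continuous_map_plane_coords inj_on_plane_coords] show ?thesis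
    by (rule that)
qed

lemma compact_embedding_image:
  assumes "graph_embedding euclidean V E pos gam" "finite V" "finite E"
  shows "compact (embedding_image V E pos gam)"
  using graph_embeddingD(3)[OF assms(1)] assms(2,3)
  unfolding embedding_image_def pathin_euclidean_iff_path
  by (intro compact_Un compact_UN) (auto intro: finite_imp_compact compact_path_image[unfolded path_image_def])

definition cross :: "real \<times> real \<Rightarrow> real \<times> real \<Rightarrow> real" where
  "cross a b = fst a * snd b - snd a * fst b"

lemma plane_apex_exists:
  fixes pos :: "'v \<Rightarrow> real \<times> real"
  assumes emb: "graph_embedding euclidean V E pos gam" and fin: "finite V" "finite E"
  obtains p where "p \<notin> embedding_image V E pos gam" "p + (1, 0) \<notin> embedding_image V E pos gam"
    "\<And>v. v \<in> V \<Longrightarrow> snd (pos v) \<noteq> snd p"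
    "\<And>v w. v \<in> V \<Longrightarrow> w \<in> V \<Longrightarrow> v \<noteq> w \<Longrightarrow> cross (pos v - p) (pos w - p) \<noteq> 0"
proof -
  let ?S = "embedding_image V E pos gam"
  obtain M where M: "\<And>x. x \<in> ?S \<Longrightarrow> norm x \<le> M"
    using compact_imp_bounded[OF compact_embedding_image[OF assms]] unfolding bounded_iff by blast
  define R where "R = M + 1"
  have right: "x \<notin> ?S" if "fst x \<ge> R" for x
    using M[of x] norm_fst_le[of "fst x" "snd x"] that unfolding R_def by force
  define c where "c = (\<lambda>v w. (fst (pos v) - R) * snd (pos w) - snd (pos v) * (fst (pos w) - R))"
  \<comment> \<open>For \<open>p = (R, t)\<close>, the points \<open>pos v\<close>, \<open>pos w\<close>, \<open>p\<close> are collinear for at most one \<open>t\<close>.\<close>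
  define bad where "bad = (\<lambda>(v, w). - c v w / (fst (pos w) - fst (pos v)))"
  have "finite (snd ` pos ` V \<union> bad ` (V \<times> V))"
    using fin(1) by simp
  then obtain t where t: "t \<notin> snd ` pos ` V \<union> bad ` (V \<times> V)"
    using ex_new_if_finite[OF infinite_UNIV_char_0] by blast
  show thesis
  proof
    show "(R, t) \<notin> ?S" "(R, t) + (1, 0) \<notin> ?S"
      using right[of "(R, t)"] right[of "(R + 1, t)"] by auto
    show "snd (pos v) \<noteq> snd (R, t)" if "v \<in> V" for v
      using t that by auto
  next
    fix v w assume vw: "v \<in> V" "w \<in> V" "v \<noteq> w"
    have cross_eq: "cross (pos v - (R, t)) (pos w - (R, t)) = t * (fst (pos w) - fst (pos v)) + c v w"
      by (simp add: cross_def c_def algebra_simps)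
    have "fst (pos v) < R"
      using right[of "pos v"] vw(1) unfolding embedding_image_def by force
    moreover have "pos v \<noteq> pos w"
      using graph_embeddingD(2)[OF emb] vw by (meson inj_onD)
    moreover have "t \<noteq> bad (v, w)"
      using t vw by auto
    ultimately show "cross (pos v - (R, t)) (pos w - (R, t)) \<noteq> 0"
    proof (cases "fst (pos w) = fst (pos v)")
      case True
      then have "cross (pos v - (R, t)) (pos w - (R, t)) = (fst (pos v) - R) * (snd (pos w) - snd (pos v))"
        unfolding cross_eq c_def by (simp add: algebra_simps)
      with True \<open>fst (pos v) < R\<close> \<open>pos v \<noteq> pos w\<close> show ?thesis
        by (simp add: prod_eq_iff)
    next
      case False
      with \<open>t \<noteq> bad (v, w)\<close> show ?thesis
        unfolding cross_eq bad_def by (simp add: field_simps)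
    qed
  qed
qed

section \<open>The cone construction\<close>

definition horiz :: "real \<times> real \<Rightarrow> real \<times> real \<times> real" where
  "horiz a = (fst a, snd a, 0)"

definition vert :: "real \<times> real \<Rightarrow> real \<times> real \<Rightarrow> real \<times> real \<times> real" where
  "vert p u = (fst p + fst u, snd p, snd u)"

definition cone_segment :: "real \<times> real \<Rightarrow> real \<Rightarrow> real \<times> real \<Rightarrow> real \<Rightarrow> real \<times> real \<times> real" where
  "cone_segment p h a s = (fst p + s * (fst a - fst p), snd p + s * (snd a - snd p), (1 - s) * h)"

definition reflect_snd :: "real \<times> real \<Rightarrow> real \<times> real" where
  "reflect_snd u = (fst u, - snd u)"

lemma inj_horiz: "inj horiz"
  by (auto simp: inj_def horiz_def prod_eq_iff)

lemma inj_vert: "inj (vert p)"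
  by (auto simp: inj_def vert_def prod_eq_iff)

lemma continuous_map_horiz: "continuous_map euclidean euclidean horiz"
  unfolding horiz_def by (simp add: continuous_intros)

lemma continuous_map_vert: "continuous_map euclidean euclidean (vert p)"
  unfolding vert_def by (simp add: continuous_intros)

lemma reflect_z_horiz [simp]: "reflect_z (horiz a) = horiz a"
  by (simp add: reflect_z_def horiz_def)

lemma reflect_z_vert [simp]: "reflect_z (vert p u) = vert p (reflect_snd u)"
  by (simp add: reflect_z_def vert_def reflect_snd_def)

lemma reflect_z_cone_segment [simp]: "reflect_z (cone_segment p h a s) = cone_segment p (- h) a s"
  by (simp add: reflect_z_def cone_segment_def)

lemma horiz_eq_vert_iff: "horiz a = vert p u \<longleftrightarrow> snd u = 0 \<and> a = (fst p + fst u, snd p)"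
  by (auto simp: horiz_def vert_def prod_eq_iff)

lemma cone_segment_0 [simp]: "cone_segment p h a 0 = vert p (0, h)"
  and cone_segment_1 [simp]: "cone_segment p h a 1 = horiz a"
  by (simp_all add: cone_segment_def vert_def horiz_def)

lemma cone_segment_eq_horiz_iff:
  "h \<noteq> 0 \<Longrightarrow> cone_segment p h a s = horiz b \<longleftrightarrow> s = 1 \<and> b = a"
  by (auto simp: cone_segment_def horiz_def prod_eq_iff)

lemma cone_segment_eq_vert_iff:
  "snd a \<noteq> snd p \<Longrightarrow> cone_segment p h a s = vert p u \<longleftrightarrow> s = 0 \<and> u = (0, h)"
  by (auto simp: cone_segment_def vert_def prod_eq_iff)

lemma cone_segment_eq_same_base:
  assumes "snd a \<noteq> snd p" "h \<noteq> h'" "cone_segment p h a s = cone_segment p h' a t"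
  shows "s = 1"
proof -
  have "s = t" and "(1 - s) * h = (1 - t) * h'"
    using assms(1,3) by (auto simp: cone_segment_def prod_eq_iff)
  then have "(1 - s) * (h - h') = 0"
    by (simp add: algebra_simps)
  then show ?thesis
    using assms(2) by simp
qed

lemma cone_segment_eq_non_collinear:
  assumes "cross (a - p) (b - p) \<noteq> 0" "cone_segment p h a s = cone_segment p h' b t"
  shows "s = 0"
proof -
  have x: "s * (fst a - fst p) = t * (fst b - fst p)" and y: "s * (snd a - snd p) = t * (snd b - snd p)"
    using assms(2) by (simp_all add: cone_segment_def prod_eq_iff)
  have "s * cross (a - p) (b - p) = (s * (fst a - fst p)) * (snd b - snd p) - (s * (snd a - snd p)) * (fst b - fst p)"
    by (simp add: cross_def algebra_simps)
  also have "\<dots> = 0"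
    unfolding x y by (simp add: algebra_simps)
  finally have "s * cross (a - p) (b - p) = 0" .
  then show ?thesis
    using assms(1) by simp
qed

lemma inj_on_cone_segment: "a \<noteq> p \<Longrightarrow> inj_on (cone_segment p h a) S"
proof (rule inj_onI)
  fix s t assume "a \<noteq> p" "cone_segment p h a s = cone_segment p h a t"
  then have "s *\<^sub>R (a - p) = t *\<^sub>R (a - p)" "a - p \<noteq> 0"
    by (simp_all add: cone_segment_def prod_eq_iff)
  then show "s = t"
    by simp
qed

lemma continuous_on_cone_segment: "continuous_on S (cone_segment p h a)"
  unfolding cone_segment_def by (intro continuous_intros)

text \<open>A drawing of \<open>Q\<close> in the \<open>(x, z)\<close>-plane with its vertices on the \<open>z\<close>-axis, symmetric
  under \<open>z \<mapsto> -z\<close> and meeting the \<open>x\<close>-axis only at \<open>x = 0\<close> and \<open>x = 1\<close>. Placed in the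
  vertical plane through \<open>p\<close>, these two points become \<open>p\<close> and \<open>p + (1, 0)\<close>, which lie off
  the drawing of \<open>G\<^sub>P\<close>.\<close>

locale vertical_model =
  fixes Q :: "'q set" and EQ :: "'q set set" and ht :: "'q \<Rightarrow> real"
    and qarc :: "'q set \<Rightarrow> real \<Rightarrow> real \<times> real"
  assumes embedding: "graph_embedding euclidean Q EQ (\<lambda>i. (0, ht i)) qarc"
    and ht_nonzero: "i \<in> Q \<Longrightarrow> ht i \<noteq> 0"
    and ht_symmetric: "i \<in> Q \<Longrightarrow> \<exists>j\<in>Q. ht j = - ht i"
    and arc_on_axis: "e \<in> EQ \<Longrightarrow> t \<in> {0..1} \<Longrightarrow> snd (qarc e t) = 0 \<Longrightarrow> fst (qarc e t) \<in> {0, 1}"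
    and arcs_symmetric: "reflect_snd ` (\<Union>e\<in>EQ. qarc e ` {0..1}) \<subseteq> (\<Union>e\<in>EQ. qarc e ` {0..1})"
begin

lemma edge_nonempty: "e \<in> EQ \<Longrightarrow> e \<noteq> {}"
  using graph_embeddingD(5)[OF embedding] by fastforce

end

locale cone_construction = vertical_model Q EQ ht qarc
  for Q :: "'q set" and EQ ht qarc +
  fixes V :: "'v set" and E :: "'v set set" and pos :: "'v \<Rightarrow> real \<times> real"
    and gam :: "'v set \<Rightarrow> real \<Rightarrow> real \<times> real" and V0 :: "'v set" and p :: "real \<times> real"
  assumes plane_embedding: "graph_embedding euclidean V E pos gam"
    and V0_subset: "V0 \<subseteq> V"
    and apex_off_plane: "p \<notin> embedding_image V E pos gam" "p + (1, 0) \<notin> embedding_image V E pos gam"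
    and vertex_off_line: "v \<in> V \<Longrightarrow> snd (pos v) \<noteq> snd p"
    and vertices_non_collinear: "v \<in> V \<Longrightarrow> w \<in> V \<Longrightarrow> v \<noteq> w \<Longrightarrow> cross (pos v - p) (pos w - p) \<noteq> 0"
begin

definition W :: "('v + 'q) set" where
  "W = Inl ` V \<union> Inr ` Q"

definition EW :: "('v + 'q) set set" where
  "EW = image Inl ` E \<union> image Inr ` EQ \<union> {{Inl a, Inr i} | a i. a \<in> V0 \<and> i \<in> Q}"

definition vertex_pos :: "'v + 'q \<Rightarrow> real \<times> real \<times> real" where
  "vertex_pos = case_sum (horiz \<circ> pos) (\<lambda>i. vert p (0, ht i))"

definition edge_arc :: "('v + 'q) set \<Rightarrow> real \<Rightarrow> real \<times> real \<times> real" where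
  "edge_arc e =
     (if e \<subseteq> range Inl then horiz \<circ> gam (Inl -` e)
      else if e \<subseteq> range Inr then vert p \<circ> qarc (Inr -` e)
      else cone_segment p (ht (THE i. Inr i \<in> e)) (pos (THE a. Inl a \<in> e)))"

lemma vertex_pos_simps [simp]:
  "vertex_pos (Inl v) = horiz (pos v)" "vertex_pos (Inr i) = vert p (0, ht i)"
  by (simp_all add: vertex_pos_def)

lemma edge_arc_Inl: "edge_arc (Inl ` e) = horiz \<circ> gam e"
  by (auto simp: edge_arc_def vimage_image_eq)

lemma edge_arc_Inr: "e \<noteq> {} \<Longrightarrow> edge_arc (Inr ` e) = vert p \<circ> qarc e"
  by (auto simp: edge_arc_def vimage_image_eq)

lemma edge_arc_cone: "edge_arc {Inl a, Inr i} = cone_segment p (ht i) (pos a)"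
proof -
  have "(THE j. Inr j \<in> {Inl a, Inr i}) = i" "(THE b. Inl b \<in> {Inl a, Inr i}) = a"
    by (rule the_equality; auto)+
  then show ?thesis
    by (auto simp: edge_arc_def)
qed

lemma vertical_in_EW: "e \<in> EQ \<Longrightarrow> Inr ` e \<in> EW"
  and cone_in_EW: "a \<in> V0 \<Longrightarrow> i \<in> Q \<Longrightarrow> {Inl a, Inr i} \<in> EW"
  by (auto simp: EW_def)

lemma EW_cases:
  assumes "e \<in> EW"
  obtains (plane) e0 where "e0 \<in> E" "e = Inl ` e0" "edge_arc e = horiz \<circ> gam e0"
    | (vertical) e0 where "e0 \<in> EQ" "e = Inr ` e0" "edge_arc e = vert p \<circ> qarc e0"
    | (cone) a i where "a \<in> V0" "i \<in> Q" "e = {Inl a, Inr i}" "edge_arc e = cone_segment p (ht i) (pos a)"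
  using assms edge_nonempty unfolding EW_def by (auto simp: edge_arc_Inl edge_arc_Inr edge_arc_cone)

abbreviation plane_image :: "(real \<times> real) set" where
  "plane_image \<equiv> embedding_image V E pos gam"

abbreviation model_image :: "(real \<times> real) set" where
  "model_image \<equiv> embedding_image Q EQ (\<lambda>i. (0, ht i)) qarc"

lemma horiz_embedding: "graph_embedding euclidean V E (horiz \<circ> pos) (\<lambda>e. horiz \<circ> gam e)"
  using plane_embedding continuous_map_horiz by (rule graph_embedding_map) (simp add: inj_horiz)

lemma vert_embedding: "graph_embedding euclidean Q EQ (\<lambda>i. vert p (0, ht i)) (\<lambda>e. vert p \<circ> qarc e)"
  using graph_embedding_map[OF embedding continuous_map_vert, of p] by (simp add: inj_vert o_def)

lemma horiz_vert_disjoint: "a \<in> plane_image \<Longrightarrow> u \<in> model_image \<Longrightarrow> horiz a \<noteq> vert p u"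
proof
  assume a: "a \<in> plane_image" and u: "u \<in> model_image" and eq: "horiz a = vert p u"
  then have u0: "snd u = 0" and a_eq: "a = (fst p + fst u, snd p)"
    by (simp_all add: horiz_eq_vert_iff)
  from u consider i where "i \<in> Q" "u = (0, ht i)" | e t where "e \<in> EQ" "t \<in> {0..1}" "u = qarc e t"
    unfolding embedding_image_def by blast
  then show False
  proof cases
    case 1
    then show False using u0 ht_nonzero by simp
  next
    case 2
    then have "fst u \<in> {0, 1}" using u0 arc_on_axis by blast
    then have "a = p \<or> a = p + (1, 0)" using a_eq by (auto simp: prod_eq_iff)
    then show False using a apex_off_plane by blast
  qed
qed

lemma pos_in_plane_image: "v \<in> V \<Longrightarrow> pos v \<in> plane_image"
  and gam_in_plane_image: "e \<in> E \<Longrightarrow> t \<in> {0..1} \<Longrightarrow> gam e t \<in> plane_image"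
  and ht_in_model_image: "i \<in> Q \<Longrightarrow> (0, ht i) \<in> model_image"
  and arc_in_model_image: "q \<in> EQ \<Longrightarrow> t \<in> {0..1} \<Longrightarrow> qarc q t \<in> model_image"
  unfolding embedding_image_def by blast+

lemma cone_interior_off_planes:
  assumes "a \<in> V" "i \<in> Q" "s \<in> {0<..<1}"
  shows "cone_segment p (ht i) (pos a) s \<notin> range horiz \<union> range (vert p)"
  using assms ht_nonzero[OF assms(2)] vertex_off_line[OF assms(1)]
  by (auto simp: cone_segment_eq_horiz_iff cone_segment_eq_vert_iff)

lemma inj_on_vertex_pos: "inj_on vertex_pos W"
proof (rule inj_onI)
  fix x y assume xy: "x \<in> W" "y \<in> W" "vertex_pos x = vertex_pos y"
  note inj_plane = graph_embeddingD(2)[OF horiz_embedding]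
    and inj_model = graph_embeddingD(2)[OF vert_embedding]
    and disjoint = horiz_vert_disjoint[OF pos_in_plane_image ht_in_model_image]
  from xy show "x = y"
    unfolding W_def
    by (elim UnE imageE; simp; metis disjoint inj_plane inj_model inj_onD o_apply)
qed

lemma vertex_pos_image: "vertex_pos ` W = horiz ` pos ` V \<union> (\<lambda>i. vert p (0, ht i)) ` Q"
  by (simp add: W_def image_Un image_image)

lemma edge_arc_is_arc:
  assumes "e \<in> EW"
  shows "pathin euclidean (edge_arc e) \<and> inj_on (edge_arc e) {0..1} \<and> {edge_arc e 0, edge_arc e 1} = vertex_pos ` e"
  using assms
proof (cases rule: EW_cases)
  case (plane e0)
  then show ?thesis
    using graph_embeddingD(3-5)[OF horiz_embedding plane(1)] by (simp add: image_image)
next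
  case (vertical e0)
  then show ?thesis
    using graph_embeddingD(3-5)[OF vert_embedding vertical(1)] by (simp add: image_image)
next
  case (cone a i)
  then have "pos a \<noteq> p"
    using V0_subset vertex_off_line by blast
  then show ?thesis
    using cone continuous_on_cone_segment
    by (auto simp: pathin_euclidean_iff_path path_def inj_on_cone_segment)
qed

lemma edge_arc_interior_avoids_vertices:
  assumes "e \<in> EW"
  shows "edge_arc e ` {0<..<1} \<inter> vertex_pos ` W = {}"
  using assms
proof (cases rule: EW_cases)
  case (plane e0)
  have "vert p (0, ht i) \<noteq> horiz (gam e0 s)" if "s \<in> {0<..<1}" "i \<in> Q" for s i
    using that plane(1) horiz_vert_disjoint[OF gam_in_plane_image ht_in_model_image, of e0 s i]
    by (metis atLeastAtMost_iff greaterThanLessThan_iff less_imp_le)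
  then show ?thesis
    using graph_embeddingD(6)[OF horiz_embedding plane(1)] plane(3)
    unfolding vertex_pos_image by (auto simp: image_image)
next
  case (vertical e0)
  have "horiz (pos v) \<noteq> vert p (qarc e0 s)" if "s \<in> {0<..<1}" "v \<in> V" for s v
    using that vertical(1) by (intro horiz_vert_disjoint pos_in_plane_image arc_in_model_image) auto
  then show ?thesis
    using graph_embeddingD(6)[OF vert_embedding vertical(1)] vertical(3)
    unfolding vertex_pos_image by (auto simp: image_image)
next
  case (cone a i)
  have vertices: "vertex_pos ` W \<subseteq> range horiz \<union> range (vert p)"
    unfolding vertex_pos_image by auto
  have "a \<in> V"
    using cone(1) V0_subset by blast
  show ?thesis
  proof (rule equals0I)
    fix y assume "y \<in> edge_arc e ` {0<..<1} \<inter> vertex_pos ` W"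
    then obtain s where "s \<in> {0<..<1}" "cone_segment p (ht i) (pos a) s \<in> vertex_pos ` W"
      using cone(4) by auto
    with vertices cone_interior_off_planes[OF \<open>a \<in> V\<close> cone(2)] show False
      by blast
  qed
qed

lemma cone_segments_disjoint:
  assumes "a \<in> V" "b \<in> V" "i \<in> Q" "j \<in> Q" "(a, i) \<noteq> (b, j)" "s \<in> {0<..<1}"
  shows "cone_segment p (ht i) (pos a) s \<noteq> cone_segment p (ht j) (pos b) t"
proof
  assume eq: "cone_segment p (ht i) (pos a) s = cone_segment p (ht j) (pos b) t"
  show False
  proof (cases "a = b")
    case True
    then have "ht i \<noteq> ht j"
      using assms(3-5) graph_embeddingD(2)[OF embedding] by (auto simp: inj_on_def)
    moreover have "cone_segment p (ht i) (pos a) s = cone_segment p (ht j) (pos a) t"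
      using eq True by simp
    ultimately show False
      using cone_segment_eq_same_base[OF vertex_off_line[OF assms(1)]] assms(6) by fastforce
  next
    case False
    then show False
      using cone_segment_eq_non_collinear[OF vertices_non_collinear[OF assms(1,2)] eq] assms(6) by simp
  qed
qed

lemma plane_arc_interior_disjoint:
  assumes "e0 \<in> E" "e' \<in> EW" "e' \<noteq> Inl ` e0" "s \<in> {0<..<1}" "t \<in> {0..1}"
  shows "horiz (gam e0 s) \<noteq> edge_arc e' t"
  using assms(2)
proof (cases rule: EW_cases)
  case (plane e1)
  with assms(3) have "e0 \<noteq> e1" by blast
  with graph_embeddingD(7)[OF horiz_embedding assms(1) plane(1)] assms(4)
  have "(horiz \<circ> gam e0) s \<notin> (horiz \<circ> gam e1) ` {0..1}"
    by (meson disjoint_iff imageI)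
  then show ?thesis
    using plane(3) assms(5) by auto
next
  case (vertical q)
  then show ?thesis
    using horiz_vert_disjoint[OF gam_in_plane_image arc_in_model_image] assms by simp
next
  case (cone a i)
  show ?thesis
  proof
    assume "horiz (gam e0 s) = edge_arc e' t"
    then have "cone_segment p (ht i) (pos a) t = horiz (gam e0 s)"
      using cone(4) by simp
    then have "gam e0 s = pos a"
      using ht_nonzero[OF cone(2)] by (simp add: cone_segment_eq_horiz_iff)
    then show False
      using graph_embeddingD(6)[OF plane_embedding assms(1)] V0_subset cone(1) assms(4)
      by (metis disjoint_iff imageI subsetD)
  qed
qed

lemma vertical_arc_interior_disjoint:
  assumes "q \<in> EQ" "e' \<in> EW" "e' \<noteq> Inr ` q" "s \<in> {0<..<1}" "t \<in> {0..1}"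
  shows "vert p (qarc q s) \<noteq> edge_arc e' t"
  using assms(2)
proof (cases rule: EW_cases)
  case (plane e1)
  have "horiz (gam e1 t) \<noteq> vert p (qarc q s)"
    using assms plane(1) by (intro horiz_vert_disjoint gam_in_plane_image arc_in_model_image) auto
  then show ?thesis
    using plane(3) by simp
next
  case (vertical q')
  with assms(3) have "q \<noteq> q'" by blast
  with graph_embeddingD(7)[OF vert_embedding assms(1) vertical(1)] assms(4)
  have "(vert p \<circ> qarc q) s \<notin> (vert p \<circ> qarc q') ` {0..1}"
    by (meson disjoint_iff imageI)
  then show ?thesis
    using vertical(3) assms(5) by auto
next
  case (cone a i)
  show ?thesis
  proof
    assume "vert p (qarc q s) = edge_arc e' t"
    then have "cone_segment p (ht i) (pos a) t = vert p (qarc q s)"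
      using cone(4) by simp
    then have "qarc q s = (0, ht i)"
      using vertex_off_line[OF subsetD[OF V0_subset cone(1)]] by (simp add: cone_segment_eq_vert_iff)
    then show False
      using graph_embeddingD(6)[OF embedding assms(1)] cone(2) assms(4)
      by (metis disjoint_iff imageI)
  qed
qed

lemma cone_interior_disjoint:
  assumes "a \<in> V0" "i \<in> Q" "e' \<in> EW" "e' \<noteq> {Inl a, Inr i}" "s \<in> {0<..<1}"
  shows "cone_segment p (ht i) (pos a) s \<noteq> edge_arc e' t"
proof -
  have "a \<in> V"
    using assms(1) V0_subset by blast
  note off = cone_interior_off_planes[OF this assms(2,5)]
  from assms(3) show ?thesis
  proof (cases rule: EW_cases)
    case (plane e0)
    then show ?thesis
      using off by (metis UnI1 comp_apply rangeI)
  next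
    case (vertical q)
    then show ?thesis
      using off by (metis UnI2 comp_apply rangeI)
  next
    case (cone b j)
    with assms(4) have "(a, i) \<noteq> (b, j)" by auto
    moreover have "b \<in> V"
      using cone(1) V0_subset by blast
    ultimately show ?thesis
      using cone_segments_disjoint[OF \<open>a \<in> V\<close> _ assms(2) cone(2) _ assms(5)] cone(4) by simp
  qed
qed

lemma edge_arcs_disjoint:
  assumes "e \<in> EW" "e' \<in> EW" "e \<noteq> e'" "s \<in> {0<..<1}" "t \<in> {0..1}"
  shows "edge_arc e s \<noteq> edge_arc e' t"
  using assms(1)
proof (cases rule: EW_cases)
  case (plane e0)
  then show ?thesis
    using plane_arc_interior_disjoint[OF plane(1) assms(2) _ assms(4,5)] assms(3) by simp
next
  case (vertical q)
  then show ?thesis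
    using vertical_arc_interior_disjoint[OF vertical(1) assms(2) _ assms(4,5)] assms(3) by simp
next
  case (cone a i)
  then show ?thesis
    using cone_interior_disjoint[OF cone(1,2) assms(2) _ assms(4)] assms(3) by simp
qed

lemma joined_embedding: "graph_embedding euclidean W EW vertex_pos edge_arc"
proof (rule graph_embeddingI)
  show "vertex_pos ` W \<subseteq> topspace euclidean" "inj_on vertex_pos W"
    by (simp_all add: inj_on_vertex_pos)
next
  fix e e' assume "e \<in> EW" "e' \<in> EW" "e \<noteq> e'"
  then show "edge_arc e ` {0<..<1} \<inter> edge_arc e' ` {0..1} = {}"
    using edge_arcs_disjoint by blast
qed (use edge_arc_is_arc edge_arc_interior_avoids_vertices in blast)+

lemma reflect_z_vertex_pos:
  assumes "w \<in> W"
  shows "reflect_z (vertex_pos w) \<in> vertex_pos ` W"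
proof -
  from assms consider v where "v \<in> V" "w = Inl v" | i where "i \<in> Q" "w = Inr i"
    unfolding W_def by blast
  then show ?thesis
  proof cases
    case 1
    then have "reflect_z (vertex_pos w) = vertex_pos w"
      by simp
    then show ?thesis
      using assms by (metis imageI)
  next
    case 2
    then obtain j where "j \<in> Q" "ht j = - ht i"
      using ht_symmetric by blast
    then have "reflect_z (vertex_pos w) = vertex_pos (Inr j)" "Inr j \<in> W"
      using 2 by (simp_all add: reflect_snd_def W_def)
    then show ?thesis
      by (metis imageI)
  qed
qed

lemma reflect_z_edge_arc:
  assumes "e \<in> EW" "t \<in> {0..1}"
  shows "reflect_z (edge_arc e t) \<in> (\<Union>e\<in>EW. edge_arc e ` {0..1})"
  using assms(1)
proof (cases rule: EW_cases)
  case (plane e0)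
  then show ?thesis
    using assms by force
next
  case (vertical q)
  then have "reflect_snd (qarc q t) \<in> (\<Union>e\<in>EQ. qarc e ` {0..1})"
    using assms(2) arcs_symmetric by blast
  then obtain q' t' where "q' \<in> EQ" "t' \<in> {0..1}" "reflect_snd (qarc q t) = qarc q' t'"
    by blast
  moreover from this(1) have "reflect_z (edge_arc e t) = edge_arc (Inr ` q') t'"
    using vertical(3) edge_arc_Inr[OF edge_nonempty] \<open>reflect_snd (qarc q t) = qarc q' t'\<close> by simp
  ultimately show ?thesis
    using vertical_in_EW by blast
next
  case (cone a i)
  then obtain j where "j \<in> Q" "ht j = - ht i"
    using ht_symmetric by blast
  then have "reflect_z (edge_arc e t) = edge_arc {Inl a, Inr j} t" "{Inl a, Inr j} \<in> EW"
    using cone by (simp_all add: edge_arc_cone cone_in_EW)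
  then show ?thesis
    using assms(2) by blast
qed

lemma reflect_z_joined_image:
  "reflect_z ` embedding_image W EW vertex_pos edge_arc = embedding_image W EW vertex_pos edge_arc"
proof (rule image_eq_if_involution)
  show "reflect_z ` embedding_image W EW vertex_pos edge_arc \<subseteq> embedding_image W EW vertex_pos edge_arc"
    using reflect_z_vertex_pos reflect_z_edge_arc unfolding embedding_image_def by blast
  show "reflect_z (reflect_z x) = x" for x
    by (simp add: reflect_z_def split: prod.splits)
qed

lemma achirally_embeddable_joined: "achirally_embeddable W EW"
  using joined_embedding reflect_z_joined_image by (rule achirally_embeddable_if_reflect_z_invariant)

end

lemma achirally_embeddable_cone_join:
  fixes pos :: "'v \<Rightarrow> real \<times> real"
  assumes "graph_embedding euclidean V E pos gam" "finite V" "finite E" "V0 \<subseteq> V"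
    and "vertical_model Q EQ ht qarc"
  shows "achirally_embeddable (Inl ` V \<union> Inr ` Q)
           (image Inl ` E \<union> image Inr ` EQ \<union> {{Inl a, Inr i} | a i. a \<in> V0 \<and> i \<in> Q})"
proof -
  obtain p where "p \<notin> embedding_image V E pos gam" "p + (1, 0) \<notin> embedding_image V E pos gam"
    "\<And>v. v \<in> V \<Longrightarrow> snd (pos v) \<noteq> snd p"
    "\<And>v w. v \<in> V \<Longrightarrow> w \<in> V \<Longrightarrow> v \<noteq> w \<Longrightarrow> cross (pos v - p) (pos w - p) \<noteq> 0"
    using plane_apex_exists[OF assms(1-3)] by blast
  with assms interpret cone_construction Q EQ ht qarc V E pos gam V0 p
    by (simp add: cone_construction_def cone_construction_axioms_def)
  show ?thesis
    using achirally_embeddable_joined unfolding W_def EW_def .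
qed

section \<open>Drawings of \<open>Q\<close>\<close>

definition alternating_height :: "nat \<Rightarrow> real" where
  "alternating_height i = (if even i then 1 else -1) * (real (i div 2) + 1)"

lemma alternating_height_nonzero: "alternating_height i \<noteq> 0"
  by (simp add: alternating_height_def)

lemma inj_alternating_height: "inj alternating_height"
proof (rule injI)
  fix i j assume eq: "alternating_height i = alternating_height j"
  then have "even i = even j"
    unfolding alternating_height_def by (auto split: if_splits)
  with eq have "i div 2 = j div 2"
    unfolding alternating_height_def by (auto split: if_splits)
  with \<open>even i = even j\<close> show "i = j"
    by (metis div_mult_mod_eq mod2_eq_if)
qed

lemma alternating_height_symmetric:
  assumes "even n" "i < n"
  shows "\<exists>j\<in>{..<n}. alternating_height j = - alternating_height i"
proof (cases "even i")
  case True
  with assms have "i + 1 < n"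
    by (metis Suc_lessI add.commute plus_1_eq_Suc even_Suc)
  with True show ?thesis
    by (intro bexI[of _ "i + 1"]) (auto simp: alternating_height_def)
next
  case False
  then show ?thesis
    using assms(2) by (intro bexI[of _ "i - 1"]) (auto simp: alternating_height_def elim!: oddE)
qed

lemma vertical_model_independent_set:
  "even n \<Longrightarrow> vertical_model {..<n} {} alternating_height qarc"
  by unfold_locales
    (auto simp: graph_embedding_def inj_on_def inj_alternating_height[THEN injD]
       alternating_height_nonzero alternating_height_symmetric)

definition K11_arc :: "nat set \<Rightarrow> real \<Rightarrow> real \<times> real" where
  "K11_arc e t = (0, 1 - 2 * t)"

lemma vertical_model_K11: "vertical_model K11_V K11_E alternating_height K11_arc"
proof unfold_locales
  show "graph_embedding euclidean K11_V K11_E (\<lambda>i. (0, alternating_height i)) K11_arc"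
    by (rule graph_embeddingI)
      (auto simp: K11_V_def K11_E_def K11_arc_def alternating_height_def inj_on_def
         pathin_euclidean_iff_path path_def intro!: continuous_intros)
  show "reflect_snd ` (\<Union>e\<in>K11_E. K11_arc e ` {0..1}) \<subseteq> (\<Union>e\<in>K11_E. K11_arc e ` {0..1})"
  proof (rule subsetI)
    fix y assume "y \<in> reflect_snd ` (\<Union>e\<in>K11_E. K11_arc e ` {0..1})"
    then obtain t :: real where "t \<in> {0..1}" "y = K11_arc {0, 1} (1 - t)"
      by (auto simp: K11_E_def K11_arc_def reflect_snd_def)
    then show "y \<in> (\<Union>e\<in>K11_E. K11_arc e ` {0..1})"
      by (auto simp: K11_E_def)
  qed
qed (auto simp: K11_V_def K11_E_def K11_arc_def alternating_height_def)

definition K22_height :: "nat \<Rightarrow> real" where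
  "K22_height i = (if i = 0 then 1 else if i = 1 then -2 else if i = 2 then -1 else 2)"

text \<open>Vertices \<open>3, 0, 2, 1\<close> sit at heights \<open>2, 1, -1, -2\<close>; the edges \<open>{0,3}\<close>, \<open>{0,2}\<close>,
  \<open>{1,2}\<close> run along the axis and \<open>{1,3}\<close> goes around through \<open>(1, 0)\<close>.\<close>
definition K22_arc :: "nat set \<Rightarrow> real \<Rightarrow> real \<times> real" where
  "K22_arc e t =
     (if e = {0, 2} then (0, 1 - 2 * t) else if e = {0, 3} then (0, 1 + t)
      else if e = {1, 2} then (0, t - 2) else (1 - \<bar>1 - 2 * t\<bar>, 2 - 4 * t))"

lemma K22_arc_simps:
  "K22_arc {0, 2} = (\<lambda>t. (0, 1 - 2 * t))" "K22_arc {0, 3} = (\<lambda>t. (0, 1 + t))"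
  "K22_arc {Suc 0, 2} = (\<lambda>t. (0, t - 2))" "K22_arc {Suc 0, 3} = (\<lambda>t. (1 - \<bar>1 - 2 * t\<bar>, 2 - 4 * t))"
  by (auto simp: fun_eq_iff K22_arc_def doubleton_eq_iff)

lemma K22_arcs_disjoint:
  assumes "e \<in> K22_E" "e' \<in> K22_E" "e \<noteq> e'" "s \<in> {0<..<1}" "t \<in> {0..1}"
  shows "K22_arc e s \<noteq> K22_arc e' t"
  using assms unfolding K22_E_def
  by (auto simp: K22_arc_simps doubleton_eq_iff abs_if split: if_splits)

lemma vertical_model_K22: "vertical_model K22_V K22_E K22_height K22_arc"
proof unfold_locales
  show "graph_embedding euclidean K22_V K22_E (\<lambda>i. (0, K22_height i)) K22_arc"
  proof (rule graph_embeddingI)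
    show "inj_on (\<lambda>i. (0, K22_height i)) K22_V"
      by (auto simp: inj_on_def K22_V_def K22_height_def)
    show "K22_arc e ` {0<..<1} \<inter> K22_arc e' ` {0..1} = {}" if "e \<in> K22_E" "e' \<in> K22_E" "e \<noteq> e'" for e e'
      using K22_arcs_disjoint[OF that] by blast
    show "pathin euclidean (K22_arc e)" if "e \<in> K22_E" for e
      using that unfolding K22_E_def pathin_euclidean_iff_path path_def
      by (auto simp: K22_arc_simps intro!: continuous_intros)
  qed (auto simp: K22_E_def K22_V_def K22_arc_simps K22_height_def inj_on_def abs_if)
  show "reflect_snd ` (\<Union>e\<in>K22_E. K22_arc e ` {0..1}) \<subseteq> (\<Union>e\<in>K22_E. K22_arc e ` {0..1})"
  proof (rule subsetI)
    fix y assume "y \<in> reflect_snd ` (\<Union>e\<in>K22_E. K22_arc e ` {0..1})"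
    then obtain e t where "e \<in> K22_E" "t \<in> {0..1}" "y = reflect_snd (K22_arc e t)"
      by blast
    then have "\<exists>e'\<in>K22_E. y = K22_arc e' (1 - t)"
      unfolding K22_E_def by (auto simp: K22_arc_simps reflect_snd_def abs_minus_commute)
    moreover have "1 - t \<in> {0..1}"
      using \<open>t \<in> {0..1}\<close> by simp
    ultimately show "y \<in> (\<Union>e\<in>K22_E. K22_arc e ` {0..1})"
      by blast
  qed
qed (auto simp: K22_V_def K22_E_def K22_height_def K22_arc_simps abs_if)

text \<open>Relabels the apex of \<open>G\<^sub>P + w\<close> as vertex \<open>0\<close> of \<open>Q\<close>, shifting the other vertices of
  \<open>Q\<close> up by one.\<close>
definition merge_apex :: "('a + unit) + nat \<Rightarrow> 'a + nat" where
  "merge_apex x = (case x of Inl (Inl v) \<Rightarrow> Inl v | Inl (Inr _) \<Rightarrow> Inr 0 | Inr i \<Rightarrow> Inr (Suc i))"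

lemma merge_apex_simps [simp]:
  "merge_apex (Inl (Inl v)) = Inl v" "merge_apex (Inl (Inr u)) = Inr 0" "merge_apex (Inr i) = Inr (Suc i)"
  by (simp_all add: merge_apex_def)

lemma inj_merge_apex: "inj merge_apex"
  by (rule injI) (auto simp: merge_apex_def split: sum.splits)

lemma merge_apex_join_V: "merge_apex ` (Inl ` join_V V {()} \<union> Inr ` {..<m}) = join_V V {..<Suc m}"
  by (auto simp: join_V_def image_Un image_image lessThan_Suc_eq_insert_0)

lemma merge_apex_image_subset_join_E:
  "image merge_apex ` (image Inl ` join_E V E {()} {} \<union> {{Inl a, Inr i} | a i. a \<in> Inl ` V \<and> i < m})
     \<subseteq> join_E V E {..<Suc m} {}"
proof
  fix x assume "x \<in> image merge_apex ` (image Inl ` join_E V E {()} {} \<union> {{Inl a, Inr i} | a i. a \<in> Inl ` V \<and> i < m})"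
  then consider e where "e \<in> E" "x = merge_apex ` Inl ` Inl ` e"
    | a where "a \<in> V" "x = merge_apex ` {Inl (Inl a), Inl (Inr ())}"
    | a i where "a \<in> V" "i < m" "x = merge_apex ` {Inl (Inl a), Inr i}"
    unfolding join_E_def by auto
  then show "x \<in> join_E V E {..<Suc m} {}"
    unfolding join_E_def by cases (auto simp: image_image)
qed

lemma join_E_subset_merge_apex_image:
  "join_E V E {..<Suc m} {}
     \<subseteq> image merge_apex ` (image Inl ` join_E V E {()} {} \<union> {{Inl a, Inr i} | a i. a \<in> Inl ` V \<and> i < m})"
    (is "_ \<subseteq> image merge_apex ` ?L")
proof
  fix x assume "x \<in> join_E V E {..<Suc m} {}"
  then consider e where "e \<in> E" "x = Inl ` e" | a b where "a \<in> V" "b < Suc m" "x = {Inl a, Inr b}"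
    unfolding join_E_def by auto
  then obtain y where "y \<in> ?L" "x = merge_apex ` y"
  proof cases
    case (1 e)
    then have "Inl ` e \<in> join_E V E {()} {}" "x = merge_apex ` Inl ` Inl ` e"
      by (auto simp: join_E_def image_image)
    then show thesis
      by (intro that[of "Inl ` Inl ` e"] UnI1 imageI)
  next
    case (2 a b)
    show thesis
    proof (cases b)
      case 0
      with 2 have "{Inl a, Inr ()} \<in> join_E V E {()} {}" "x = merge_apex ` Inl ` {Inl a, Inr ()}"
        by (auto simp: join_E_def)
      then show thesis
        by (intro that[of "Inl ` {Inl a, Inr ()}"] UnI1 imageI)
    next
      case (Suc i)
      with 2 show thesis
        by (intro that[of "{Inl (Inl a), Inr i}"] UnI2) auto
    qed
  qed
  then show "x \<in> image merge_apex ` ?L"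
    by (rule rev_image_eqI)
qed

lemma simple_graph_finite:
  assumes "simple_graph V E"
  shows "finite V" "finite E"
proof -
  show "finite V"
    using assms unfolding simple_graph_def by blast
  moreover have "E \<subseteq> Pow V"
    using assms unfolding simple_graph_def by blast
  ultimately show "finite E"
    by (meson finite_Pow_iff finite_subset)
qed

lemma finite_join:
  "finite VA \<Longrightarrow> finite VB \<Longrightarrow> finite (join_V VA VB)"
  "finite VA \<Longrightarrow> finite EA \<Longrightarrow> finite VB \<Longrightarrow> finite EB \<Longrightarrow> finite (join_E VA EA VB EB)"
  by (simp_all add: join_V_def join_E_def finite_image_set2)

lemma achirally_embeddable_join_planar:
  assumes "simple_graph V E" "planar V E" "vertical_model Q EQ ht qarc"
  shows "achirally_embeddable (join_V V Q) (join_E V E Q EQ)"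
proof -
  obtain pos gam where "graph_embedding euclidean V E (pos :: _ \<Rightarrow> real \<times> real) gam"
    using assms(2) by (rule planar_imp_plane_embedding)
  from achirally_embeddable_cone_join[OF this simple_graph_finite[OF assms(1)] subset_refl assms(3)]
  show ?thesis
    unfolding join_V_def join_E_def .
qed

lemma achirally_embeddable_join_outerplanar:
  assumes "simple_graph V E" "outerplanar V E" "even m"
  shows "achirally_embeddable (join_V V {..<Suc m}) (join_E V E {..<Suc m} {})"
proof -
  obtain pos gam where emb: "graph_embedding euclidean (join_V V {()}) (join_E V E {()} {})
      (pos :: _ \<Rightarrow> real \<times> real) gam"
    using assms(2) unfolding outerplanar_def by (blast intro: planar_imp_plane_embedding)
  have "finite (join_V V {()})" "finite (join_E V E {()} {})"
    using simple_graph_finite[OF assms(1)] by (simp_all add: finite_join)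
  moreover have "Inl ` V \<subseteq> join_V V {()}"
    by (auto simp: join_V_def)
  ultimately have "achirally_embeddable (Inl ` join_V V {()} \<union> Inr ` {..<m})
      (image Inl ` join_E V E {()} {} \<union> {{Inl a, Inr i} | a i. a \<in> Inl ` V \<and> i < m})"
    using achirally_embeddable_cone_join[OF emb _ _ _ vertical_model_independent_set[OF assms(3)]]
    by (simp only: lessThan_iff image_empty Un_empty_right)
  from achirally_embeddable_image[OF this inj_merge_apex] show ?thesis
    unfolding merge_apex_join_V subset_antisym[OF merge_apex_image_subset_join_E join_E_subset_merge_apex_image] .
qed

theorem theorem3:
  fixes V :: "'a set" and E :: "'a set set" and VQ :: "nat set" and EQ :: "nat set set"
  assumes "simple_graph V E"
    and "(planar V E \<and>
            ((VQ = K11_V \<and> EQ = K11_E) \<or> (VQ = K22_V \<and> EQ = K22_E) \<or>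
             (\<exists>n. even n \<and> 0 < n \<and> VQ = {..<n} \<and> EQ = {})))
       \<or> (outerplanar V E \<and> (\<exists>n. odd n \<and> VQ = {..<n} \<and> EQ = {}))"
  shows "achirally_embeddable (join_V V VQ) (join_E V E VQ EQ)"
  using assms(2)
proof (elim disjE conjE exE)
  assume "planar V E" "VQ = K11_V" "EQ = K11_E"
  then show ?thesis
    using achirally_embeddable_join_planar[OF assms(1) _ vertical_model_K11] by simp
next
  assume "planar V E" "VQ = K22_V" "EQ = K22_E"
  then show ?thesis
    using achirally_embeddable_join_planar[OF assms(1) _ vertical_model_K22] by simp
next
  fix n assume "planar V E" "even n" "VQ = {..<n}" "EQ = {}"
  then show ?thesis
    using achirally_embeddable_join_planar[OF assms(1) _ vertical_model_independent_set] by simp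
next
  fix n assume "outerplanar V E" "odd n" "VQ = {..<n}" "EQ = {}"
  moreover from \<open>odd n\<close> obtain m where "n = Suc m" "even m"
    by (cases n) auto
  ultimately show ?thesis
    using achirally_embeddable_join_outerplanar[OF assms(1)] by simp
qed

end
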